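(* Let $m>6C^2(C+1)$ and $l_m=\lfloor\frac{m-2}{C+1}\rfloor$. Let $F_m(\mathbf x)=\sum_{i=1}^n a_iP_m(x_i)$ be a node of the escalator tree of $m$-gonal forms with $n\ge (C-4)l_m+5$ and $a_3=a_4=\cdots=a_{(C-4)l_m+5}=3$. (1) If $a_1+a_2+\cdots+a_n\ge 3(m-3)-1$ and $a_i\equiv0\pmod 3$ for all $3\le i\le n$, then $F_m(\mathbf x)$ is universal (hence a leaf). (2) If $a_n\not\equiv 0\pmod 3$, then $F_m(\mathbf x)$ is universal (hence a leaf).
   Context: For an integer $m\ge 3$ and $x\in\mathbb Z$ put $P_m(x)=\frac{m-2}{2}x^2-\frac{m-4}{2}x$. An $m$-gonal form of rank $n$ is $a_1P_m(x_1)+\cdots+a_nP_m(x_n)$ with positive integers $a_1\le\cdots\le a_n$ and $x_i\in\mathbb Z$; it represents $N$ if $N$ is a value at some integer vector, and is universal if it represents every positive integer. The truant of a non-universal form is the smallest positive integer it does not represent (the empty form has truant $1$). The escalator tree of $m$-gonal forms is the rooted tree whose root is the empty form; a universal node is a leaf, and a non-universal node $\sum_{i=1}^k a_iP_m(x_i)$ has as children exactly all forms $\sum_{i=1}^{k+1}a_iP_m(x_i)$ with $a_{k+1}\ge a_k$ (any $a_1\ge1$ if $k=0$) that represent the truant of the node. Standing assumption: $C$ is a fixed absolute constant such that for every $m\ge3$, every $m$-gonal form that represents every positive integer in $[1,C(m-2)]$ is universal. *)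

theory Defs
  imports Main
begin

text \<open>The m-gonal number P_m(x) = ((m-2)x^2 - (m-4)x)/2 for integer x
  (the numerator is always even, so div 2 is exact).\<close>
definition Pgon :: "nat \<Rightarrow> int \<Rightarrow> int" where
  "Pgon m x = ((int m - 2) * x^2 - (int m - 4) * x) div 2"

text \<open>A form is the list [a_1,...,a_n] of its coefficients.\<close>
definition is_form :: "nat list \<Rightarrow> bool" where
  "is_form as \<longleftrightarrow> (\<forall>a\<in>set as. 0 < a) \<and> sorted as"

definition form_value :: "nat \<Rightarrow> nat list \<Rightarrow> int list \<Rightarrow> int" where
  "form_value m as xs = (\<Sum>i<length as. int (as ! i) * Pgon m (xs ! i))"

definition represents :: "nat \<Rightarrow> nat list \<Rightarrow> int \<Rightarrow> bool" where
  "represents m as N \<longleftrightarrow> (\<exists>xs. length xs = length as \<and> form_value m as xs = N)"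

definition universal :: "nat \<Rightarrow> nat list \<Rightarrow> bool" where
  "universal m as \<longleftrightarrow> (\<forall>N::int. 0 < N \<longrightarrow> represents m as N)"

definition truant :: "nat \<Rightarrow> nat list \<Rightarrow> int" where
  "truant m as = (LEAST N::int. 0 < N \<and> \<not> represents m as N)"

inductive escalator_node :: "nat \<Rightarrow> nat list \<Rightarrow> bool" for m where
  root: "escalator_node m []"
| child: "\<lbrakk> escalator_node m as; \<not> universal m as; 1 \<le> b;
            as \<noteq> [] \<longrightarrow> last as \<le> b;
            represents m (as @ [b]) (truant m as) \<rbrakk>
          \<Longrightarrow> escalator_node m (as @ [b])"

definition standing_constant :: "nat \<Rightarrow> bool" where
  "standing_constant C \<longleftrightarrow>
     (\<forall>m\<ge>3. \<forall>as. is_form as \<longrightarrow>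
        (\<forall>N::int. 1 \<le> N \<and> N \<le> int C * (int m - 2) \<longrightarrow> represents m as N) \<longrightarrow>
        universal m as)"

end

theory Submission
  imports Defs
begin

text \<open>
  Write the node as \<open>P(x\<^sub>0) + a\<^sub>2 P(x\<^sub>1) + 3 (P(x\<^sub>2) + \<dots> + P(x\<^sub>L\<^sub>-\<^sub>1))\<close>
  plus a tail; escalation forces \<open>a\<^sub>2 \<in> {1, 2}\<close>. As \<open>P\<^sub>m\<close> takes the values
  \<open>0, 1, m - 3, m\<close> at \<open>0, 1, -1, 2\<close>, the block of \<open>L - 2\<close> threes realises
  \<open>3 (s (m - 3) + y)\<close> for all small \<open>s, y\<close>, and together with the head this represents
  every \<open>N \<le> C (m - 2)\<close> outside one residue class mod 3, the gap class.
  In case (2), subtracting the last coefficient, which is prime to 3, moves a gap number out of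
  the gap class, and gap numbers below that coefficient lie below the truant of the shorter
  node. In case (1) every prefix misses a gap number of about the size of its coefficient sum,
  so by escalation each tail coefficient is at most about the sum of the coefficients before it;
  hence the tail realises every multiple of 3 up to a bound, which the sum hypothesis makes
  large enough. In both cases the standing assumption yields universality; it also forces
  \<open>C \<ge> 15\<close>, which is what makes the block long enough.
\<close>

section \<open>Values of m-gonal numbers\<close>

lemma two_Pgon: "2 * Pgon m x = (int m - 3) * (x * (x - 1)) + x * (x + 1)"
proof -
  have "even ((int m - 2) * x^2 - (int m - 4) * x)"
    by (simp add: power2_eq_square algebra_simps)
  then show ?thesis
    unfolding Pgon_def by (simp add: power2_eq_square algebra_simps)
qed

lemma Pgon_0 [simp]: "Pgon m 0 = 0"
  and Pgon_1 [simp]: "Pgon m 1 = 1"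
  and Pgon_minus_1 [simp]: "Pgon m (-1) = int m - 3"
  and Pgon_2 [simp]: "Pgon m 2 = int m"
  by (simp_all add: Pgon_def)

lemma two_Pgon_ge:
  assumes "3 \<le> m" "a \<le> x * (x - 1)" "b \<le> x * (x + 1)"
  shows "(int m - 3) * a + b \<le> 2 * Pgon m x"
  unfolding two_Pgon using assms by (intro add_mono mult_left_mono) auto

lemma Pgon_nonneg:
  assumes "3 \<le> m"
  shows "0 \<le> Pgon m x"
proof -
  have "0 \<le> x * (x - 1)" "0 \<le> x * (x + 1)"
    by (auto simp: zero_le_mult_iff)
  then show ?thesis using two_Pgon_ge[OF assms, of 0 x 0] by simp
qed

lemma Pgon_ge_m_minus_3:
  assumes "3 \<le> m" "x \<notin> {0, 1}"
  shows "int m - 3 \<le> Pgon m x"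
proof -
  have "0 \<le> (x - 2) * (x + 1)" "0 \<le> x * (x + 1)"
    using assms(2) by (auto simp: zero_le_mult_iff)
  then have "2 \<le> x * (x - 1)" "0 \<le> x * (x + 1)"
    by (simp_all add: algebra_simps)
  then show ?thesis using two_Pgon_ge[OF assms(1), of 2 x 0] by simp
qed

lemma Pgon_ge_large:
  assumes "3 \<le> m" "x \<notin> {-1, 0, 1, 2}"
  shows "3 * int m - 8 \<le> Pgon m x"
proof -
  have "0 \<le> (x - 3) * (x + 2)" "0 \<le> (x - 1) * (x + 2)"
    using assms(2) by (auto simp: zero_le_mult_iff)
  then have "6 \<le> x * (x - 1)" "2 \<le> x * (x + 1)"
    by (simp_all add: algebra_simps)
  then show ?thesis using two_Pgon_ge[OF assms(1), of 6 x 2] by simp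
qed

lemma Pgon_pos:
  assumes "4 \<le> m" "x \<noteq> 0"
  shows "1 \<le> Pgon m x"
proof (cases "x = 1")
  case False
  then have "int m - 3 \<le> Pgon m x" using Pgon_ge_m_minus_3[of m x] assms by simp
  then show ?thesis using assms(1) by linarith
qed simp

lemma Pgon_less_cases:
  assumes "3 \<le> m" "Pgon m x < 3 * int m - 8"
  shows "Pgon m x \<in> {0, 1, int m - 3, int m}"
proof -
  have "x \<in> {-1, 0, 1, 2}" using Pgon_ge_large[of m x] assms by linarith
  then show ?thesis by (elim insertE) simp_all
qed

section \<open>Representations and the escalator tree\<close>

lemma represents_iff:
  "represents m as N \<longleftrightarrow> (\<exists>f. N = (\<Sum>i<length as. int (as ! i) * Pgon m (f i)))"
proof
  assume "represents m as N"
  then obtain xs where "length xs = length as" "form_value m as xs = N"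
    unfolding represents_def by blast
  then show "\<exists>f. N = (\<Sum>i<length as. int (as ! i) * Pgon m (f i))"
    unfolding form_value_def by (intro exI[of _ "(!) xs"]) simp
next
  assume "\<exists>f. N = (\<Sum>i<length as. int (as ! i) * Pgon m (f i))"
  then obtain f where "N = (\<Sum>i<length as. int (as ! i) * Pgon m (f i))" by blast
  then show "represents m as N"
    unfolding represents_def form_value_def
    by (intro exI[of _ "map f [0..<length as]"]) (auto intro!: sum.cong)
qed

lemma represents_append:
  assumes "represents m as N"
  shows "represents m (as @ bs) N"
proof -
  obtain f where f: "N = (\<Sum>i<length as. int (as ! i) * Pgon m (f i))"
    using assms unfolding represents_iff by blast
  let ?g = "\<lambda>i. if i < length as then f i else 0"
  let ?F = "\<lambda>i. int ((as @ bs) ! i) * Pgon m (?g i)"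
  have "(\<Sum>i<length (as @ bs). ?F i)
      = (\<Sum>i<length as. ?F i) + (\<Sum>i\<in>{length as..<length (as @ bs)}. ?F i)"
    using sum.atLeastLessThan_concat[of 0 "length as" "length (as @ bs)" ?F]
    by (simp add: atLeast0LessThan)
  also have "\<dots> = N" unfolding f by (simp add: nth_append)
  finally have "N = (\<Sum>i<length (as @ bs). ?F i)" ..
  then show ?thesis unfolding represents_iff by (rule exI[of _ ?g])
qed

lemma represents_take:
  "represents m (take p as) N \<Longrightarrow> represents m as N"
  using represents_append[of m "take p as" N "drop p as"] by simp

lemma represents_snocD:
  assumes "represents m (as @ [b]) N"
  obtains v x where "represents m as v" "N = v + int b * Pgon m x"
proof -
  obtain f where "N = (\<Sum>i<Suc (length as). int ((as @ [b]) ! i) * Pgon m (f i))"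
    using assms unfolding represents_iff by auto
  then have "N = (\<Sum>i<length as. int (as ! i) * Pgon m (f i)) + int b * Pgon m (f (length as))"
    by (simp add: nth_append)
  then show ?thesis using that unfolding represents_iff by blast
qed

lemma represents_nonneg: "3 \<le> m \<Longrightarrow> represents m as N \<Longrightarrow> 0 \<le> N"
  unfolding represents_iff by (auto intro!: sum_nonneg mult_nonneg_nonneg Pgon_nonneg)

lemma truant_is_least:
  assumes "\<not> universal m as"
  shows "0 < truant m as \<and> \<not> represents m as (truant m as)
    \<and> (\<forall>N. 0 < N \<and> \<not> represents m as N \<longrightarrow> truant m as \<le> N)"
proof -
  let ?P = "\<lambda>N::int. 0 < N \<and> \<not> represents m as N"
  obtain N0 where "?P N0" using assms unfolding universal_def by auto
  then have ex: "?P (int (nat N0))" by simp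
  define n where "n = (LEAST n. ?P (int n))"
  have n: "?P (int n)" unfolding n_def by (rule LeastI[of "\<lambda>n. ?P (int n)", OF ex])
  have least: "int n \<le> N" if "?P N" for N
  proof -
    have "n \<le> nat N" unfolding n_def by (rule Least_le) (use that in simp)
    then show ?thesis using that by linarith
  qed
  have "truant m as = int n"
    unfolding truant_def by (rule Least_equality) (use n least in auto)
  then show ?thesis using n least by simp
qed

lemma truant_pos: "\<not> universal m as \<Longrightarrow> 0 < truant m as"
  and not_represents_truant: "\<not> universal m as \<Longrightarrow> \<not> represents m as (truant m as)"
  and truant_le: "\<not> universal m as \<Longrightarrow> 0 < N \<Longrightarrow> \<not> represents m as N \<Longrightarrow> truant m as \<le> N"
  using truant_is_least by blast+

lemma represents_less_truant:
  "\<not> universal m as \<Longrightarrow> 0 < N \<Longrightarrow> N < truant m as \<Longrightarrow> represents m as N"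
  using truant_le by fastforce

lemma coefficient_le_truant:
  assumes "4 \<le> m" "\<not> universal m as" "represents m (as @ [b]) (truant m as)"
  shows "int b \<le> truant m as"
proof -
  obtain v x where v: "represents m as v" and t: "truant m as = v + int b * Pgon m x"
    using represents_snocD[OF assms(3)] .
  have "x \<noteq> 0" using v t not_represents_truant[OF assms(2)] by auto
  then have "int b * 1 \<le> int b * Pgon m x"
    using Pgon_pos[OF assms(1)] by (intro mult_left_mono) auto
  moreover have "0 \<le> v" using represents_nonneg[OF _ v] assms(1) by simp
  ultimately show ?thesis using t by linarith
qed

lemma escalator_node_step:
  assumes "escalator_node m as" "p < length as"
  shows "\<not> universal m (take p as) \<and> represents m (take p as @ [as ! p]) (truant m (take p as))"
  using assms
proof (induction arbitrary: p)
  case (child as b)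
  then show ?case
    by (cases "p < length as") (auto simp: nth_append less_Suc_eq)
qed simp

lemma escalator_node_coefficient_le_truant:
  assumes "escalator_node m as" "4 \<le> m" "p < length as"
  shows "int (as ! p) \<le> truant m (take p as)"
  using escalator_node_step[OF assms(1,3)] coefficient_le_truant[OF assms(2)] by blast

lemma escalator_node_is_form: "escalator_node m as \<Longrightarrow> is_form as"
proof (induction rule: escalator_node.induct)
  case (child as b)
  have "x \<le> b" if "x \<in> set as" for x
  proof -
    have "x \<le> last as"
    proof (cases as rule: rev_cases)
      case (snoc ys y)
      then show ?thesis using child.IH that unfolding is_form_def by (auto simp: sorted_append)
    qed (use that in simp)
    then show ?thesis using child that by auto
  qed
  then show ?case using child unfolding is_form_def by (auto simp: sorted_append)
qed (simp add: is_form_def)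

lemma represents_single: "represents m [a] N \<longleftrightarrow> (\<exists>x. N = int a * Pgon m x)"
  unfolding represents_iff
proof
  assume "\<exists>x. N = int a * Pgon m x"
  then obtain x where "N = int a * Pgon m x" ..
  then show "\<exists>f. N = (\<Sum>i<length [a]. int ([a] ! i) * Pgon m (f i))"
    by (intro exI[of _ "\<lambda>_. x"]) simp
qed auto

lemma truant_Nil: "truant m [] = 1"
proof -
  have rep: "represents m [] N \<longleftrightarrow> N = 0" for N unfolding represents_iff by simp
  have "\<not> universal m []"
  proof
    assume "universal m []"
    then have "represents m [] 1" unfolding universal_def by simp
    then show False unfolding rep by simp
  qed
  then have "truant m [] \<le> 1" "0 < truant m []"
    using truant_le[of m "[]" 1] truant_pos[of m "[]"] rep by simp_all
  then show ?thesis by linarith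
qed

lemma truant_single_1:
  assumes "6 \<le> m"
  shows "truant m [1] = 2"
proof -
  have rep: "represents m [1] N \<longleftrightarrow> (\<exists>x. N = Pgon m x)" for N
    using represents_single[of m 1 N] by simp
  have "\<not> represents m [1] 2"
  proof
    assume "represents m [1] 2"
    then obtain x where x: "Pgon m x = 2" unfolding rep by auto
    then have "Pgon m x \<in> {0, 1, int m - 3, int m}" using Pgon_less_cases[of m x] assms by simp
    then show False using x assms by auto
  qed
  moreover have "represents m [1] 1" unfolding rep by (metis Pgon_1)
  moreover have nu: "\<not> universal m [1]"
  proof
    assume "universal m [1]"
    then have "represents m [1] 2" unfolding universal_def by simp
    with \<open>\<not> represents m [1] 2\<close> show False ..
  qed
  ultimately have "truant m [1] \<le> 2" "truant m [1] \<noteq> 1" "0 < truant m [1]"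
    using truant_le[OF nu, of 2] not_represents_truant[OF nu] truant_pos[OF nu] by auto
  then show ?thesis by linarith
qed

lemma escalator_node_first_coefficients:
  assumes "escalator_node m as" "6 \<le> m" "2 \<le> length as"
  shows "as ! 0 = 1" "as ! 1 = 1 \<or> as ! 1 = 2"
proof -
  have pos: "0 < as ! i" if "i < length as" for i
    using escalator_node_is_form[OF assms(1)] that unfolding is_form_def by (simp add: nth_mem)
  have "0 < length as" using assms(3) by linarith
  then have "represents m [as ! 0] 1"
    using escalator_node_step[OF assms(1), of 0] truant_Nil by simp
  then obtain x where "int (as ! 0) * Pgon m x = 1" unfolding represents_single by auto
  then show a0: "as ! 0 = 1" by (auto simp: zmult_eq_1_iff)
  have "take 1 as = [1]" using a0 assms(3) by (cases as) auto
  then have "as ! 1 \<le> 2"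
    using escalator_node_coefficient_le_truant[OF assms(1) _, of 1] truant_single_1 assms by simp
  then show "as ! 1 = 1 \<or> as ! 1 = 2" using pos[of 1] assms(3) by auto
qed

section \<open>The standing constant is at least 15\<close>

text \<open>
  The pentagonal form \<open>[1, 1, 11]\<close> represents \<open>1, \<dots>, 42 = 14 (5 - 2)\<close> but not 43, so
  the standing assumption fails for \<open>C \<le> 14\<close>.
\<close>

lemma Pgon_5_ge_51:
  assumes "x \<notin> {-5..5}"
  shows "51 \<le> Pgon 5 x"
proof -
  have "0 \<le> (x - 6) * (3 * x + 17)" using assms by (auto simp: zero_le_mult_iff)
  then show ?thesis using two_Pgon[of 5 x] by (simp add: algebra_simps)
qed

lemma Pgon_5_le_43:
  assumes "Pgon 5 x \<le> 43"
  shows "Pgon 5 x \<in> {0, 1, 2, 5, 7, 12, 15, 22, 26, 35, 40}"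
proof -
  have "x \<in> {-5..5}" using Pgon_5_ge_51[of x] assms by force
  then have "x \<in> {-5, -4, -3, -2, -1, 0, 1, 2, 3, 4, 5}" by simp presburger
  then show ?thesis by (auto simp: Pgon_def)
qed

lemma not_represents_pentagonal_1_1_11_43: "\<not> represents 5 [1, 1, 11] 43"
proof
  assume "represents 5 [1, 1, 11] 43"
  then obtain f where "43 = (\<Sum>i<length [1, 1, 11::nat]. int ([1, 1, 11] ! i) * Pgon 5 (f i))"
    unfolding represents_iff ..
  then have f: "Pgon 5 (f 0) + Pgon 5 (f 1) + 11 * Pgon 5 (f 2) = 43"
    by (simp add: lessThan_nat_numeral numeral_2_eq_2)
  have nonneg: "0 \<le> Pgon 5 x" for x by (simp add: Pgon_nonneg)
  have "Pgon 5 (f 0) \<le> 43" "Pgon 5 (f 1) \<le> 43" "Pgon 5 (f 2) \<le> 43" "Pgon 5 (f 2) \<le> 3"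
    using f nonneg[of "f 0"] nonneg[of "f 1"] nonneg[of "f 2"] by linarith+
  then have v: "Pgon 5 (f 0) \<in> {0, 1, 2, 5, 7, 12, 15, 22, 26, 35, 40}"
    "Pgon 5 (f 1) \<in> {0, 1, 2, 5, 7, 12, 15, 22, 26, 35, 40}" "Pgon 5 (f 2) \<in> {0, 1, 2}"
    using Pgon_5_le_43[of "f 0"] Pgon_5_le_43[of "f 1"] Pgon_5_le_43[of "f 2"] by auto
  then have "Pgon 5 (f 0) + Pgon 5 (f 1) \<in> {43, 32, 21}" using f by auto
  then show False using v(1,2) by auto
qed

lemma represents_pentagonal_1_1_11:
  assumes "1 \<le> N" "N \<le> 42"
  shows "represents 5 [1, 1, 11] N"
proof -
  let ?v = "\<lambda>(a, b, c). Pgon 5 a + Pgon 5 b + 11 * Pgon 5 c"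
  let ?W = "[(0, 1, 0), (-1, 0, 0), (-1, 1, 0), (-1, -1, 0), (0, 2, 0), (1, 2, 0), (-2, 0, 0),
      (-2, 1, 0), (-2, -1, 0), (2, 2, 0), (0, 0, 1), (-2, 2, 0), (-1, 0, 1), (-2, -2, 0),
      (-3, 0, 0), (-3, 1, 0), (-3, -1, 0), (-2, 0, 1), (-2, 1, 1), (-3, 2, 0), (2, 2, 1),
      (-3, -2, 0), (-2, 2, 1), (-1, 0, -1), (-2, -2, 1), (-4, 0, 0), (-4, 1, 0), (-4, -1, 0),
      (-2, 0, -1), (-3, -3, 0), (-4, 2, 0), (2, 2, -1), (-4, -2, 0), (-2, 2, -1), (-1, 4, 1),
      (-2, -2, -1), (-4, 0, 1), (-4, 1, 1), (-4, -1, 1), (-5, 0, 0), (-5, 1, 0), (-5, -1, 0)]"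
  have "map ?v ?W = [1..42]" by (simp add: Pgon_def upto.simps)
  then have "N \<in> ?v ` set ?W" using assms by (simp only: list.set_map[symmetric]) simp
  then obtain w where "N = ?v w" "w \<in> set ?W" by (rule imageE)
  moreover obtain a b c where "w = (a, b, c)" by (cases w)
  ultimately have "N = Pgon 5 a + Pgon 5 b + 11 * Pgon 5 c" by simp
  then show ?thesis
    unfolding represents_iff
    by (intro exI[of _ "\<lambda>i. [a, b, c] ! i"]) (simp add: lessThan_nat_numeral numeral_2_eq_2)
qed

lemma standing_constant_ge_15:
  assumes "standing_constant C"
  shows "15 \<le> C"
proof (rule ccontr)
  assume "\<not> 15 \<le> C"
  then have "\<forall>N. 1 \<le> N \<and> N \<le> int C * (int 5 - 2) \<longrightarrow> represents 5 [1, 1, 11] N"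
    using represents_pentagonal_1_1_11 by auto
  moreover have "is_form [1, 1, 11]" by (simp add: is_form_def)
  ultimately have "universal 5 [1, 1, 11]"
    using assms unfolding standing_constant_def by simp
  then show False using not_represents_pentagonal_1_1_11_43 unfolding universal_def by auto
qed

section \<open>Blocks of threes\<close>

lemma sum_atLeastLessThan_Suc_fun_upd:
  assumes "a \<le> n"
  shows "(\<Sum>i\<in>{a..<Suc n}. F i ((g(n := v)) i)) = (\<Sum>i\<in>{a..<n}. F i (g i)) + F n v"
proof -
  have "(\<Sum>i\<in>{a..<n}. F i ((g(n := v)) i)) = (\<Sum>i\<in>{a..<n}. F i (g i))"
    by (intro sum.cong) auto
  then show ?thesis using assms by simp
qed

lemma sum_Pgon_attains_nat:
  assumes "e \<le> s" "s + u \<le> k"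
  shows "\<exists>g. (\<Sum>i\<in>{lo..<lo + k}. Pgon m (g i)) = int s * (int m - 3) + 3 * int e + int u"
  using assms
proof (induction k arbitrary: s e u)
  case 0
  then show ?case by simp
next
  case (Suc k)
  note extend = sum_atLeastLessThan_Suc_fun_upd[of lo "lo + k" "\<lambda>_. Pgon m"]
  consider "0 < e" | "e = 0" "0 < s" | "e = 0" "s = 0" "0 < u" | "e = 0" "s = 0" "u = 0"
    by linarith
  then show ?case
  proof cases
    case 1
    then have "e - 1 \<le> s - 1" "s - 1 + u \<le> k" using Suc.prems by auto
    then obtain g where "(\<Sum>i\<in>{lo..<lo + k}. Pgon m (g i))
        = int (s - 1) * (int m - 3) + 3 * int (e - 1) + int u" using Suc.IH by blast
    with 1 Suc.prems show ?thesis
      by (intro exI[of _ "g(lo + k := 2)"]) (simp add: extend of_nat_diff algebra_simps)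
  next
    case 2
    then have "\<exists>g. (\<Sum>i\<in>{lo..<lo + k}. Pgon m (g i)) = int (s - 1) * (int m - 3) + int u"
      using Suc.IH[of 0 "s - 1" u] Suc.prems by simp
    then obtain g where "(\<Sum>i\<in>{lo..<lo + k}. Pgon m (g i)) = int (s - 1) * (int m - 3) + int u" ..
    with 2 show ?thesis
      by (intro exI[of _ "g(lo + k := -1)"]) (simp add: extend of_nat_diff algebra_simps)
  next
    case 3
    then have "\<exists>g. (\<Sum>i\<in>{lo..<lo + k}. Pgon m (g i)) = int (u - 1)"
      using Suc.IH[of 0 0 "u - 1"] Suc.prems by simp
    then obtain g where "(\<Sum>i\<in>{lo..<lo + k}. Pgon m (g i)) = int (u - 1)" ..
    with 3 show ?thesis
      by (intro exI[of _ "g(lo + k := 1)"]) (simp add: extend of_nat_diff)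
  next
    case 4
    have "\<exists>g. (\<Sum>i\<in>{lo..<lo + k}. Pgon m (g i)) = 0" using Suc.IH[of 0 0 0] by simp
    then obtain g where "(\<Sum>i\<in>{lo..<lo + k}. Pgon m (g i)) = 0" ..
    with 4 show ?thesis by (intro exI[of _ "g(lo + k := 0)"]) (simp add: extend)
  qed
qed

lemma sum_Pgon_attains:
  fixes s y :: int
  assumes "0 \<le> s" "0 \<le> y" "y \<le> int k + 2 * s" "s + 2 \<le> int k"
  shows "\<exists>g. (\<Sum>i\<in>{lo..<lo + k}. Pgon m (g i)) = s * (int m - 3) + y"
proof -
  define e where "e = (if y \<le> int k - s then 0 else (y - (int k - s) + 2) div 3)"
  define u where "u = y - 3 * e"
  have "0 \<le> e" "e \<le> s" "0 \<le> u" "s + u \<le> int k"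
    using assms unfolding e_def u_def by auto
  then have "nat e \<le> nat s" "nat s + nat u \<le> k" by linarith+
  from sum_Pgon_attains_nat[OF this, where lo = lo and m = m] \<open>0 \<le> e\<close> \<open>0 \<le> u\<close> assms(1)
  show ?thesis by (simp add: u_def)
qed

section \<open>The gap class\<close>

text \<open>
  \<open>P(x\<^sub>0) + a\<^sub>2 P(x\<^sub>1)\<close> with \<open>x\<^sub>0, x\<^sub>1 \<in> {-1, 0, 1, 2}\<close> meets every residue class
  mod 3 inside the window \<open>[m - 3, 2m - 5]\<close>, except the class of \<open>gap_residue a2 m\<close> when
  \<open>has_gap a2 m\<close>.
\<close>

definition gap_residue :: "nat \<Rightarrow> nat \<Rightarrow> int" where
  "gap_residue a2 m = (if a2 = 1 \<and> int m mod 3 = 0 then 2 else 0)"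

definition has_gap :: "nat \<Rightarrow> nat \<Rightarrow> bool" where
  "has_gap a2 m \<longleftrightarrow> (a2 = 1 \<and> int m mod 3 \<noteq> 2) \<or> (a2 = 2 \<and> int m mod 3 = 2)"

abbreviation in_gap :: "nat \<Rightarrow> nat \<Rightarrow> int \<Rightarrow> bool" where
  "in_gap a2 m N \<equiv> has_gap a2 m \<and> N mod 3 = gap_residue a2 m"

lemma not_in_gap_diff:
  assumes "in_gap a2 m N" "\<not> 3 dvd b"
  shows "\<not> in_gap a2 m (N - int b)"
proof
  assume "in_gap a2 m (N - int b)"
  then have "(N - int b) mod 3 = N mod 3" using assms(1) by simp
  then have "3 dvd (N - int b) - N" by (simp only: mod_eq_dvd_iff)
  then show False using assms(2) by presburger
qed

lemma head_window:
  assumes "4 \<le> m" "a2 = 1 \<or> a2 = 2" "\<not> in_gap a2 m z"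
  obtains x0 x1 where "int m - 3 \<le> Pgon m x0 + int a2 * Pgon m x1"
    "Pgon m x0 + int a2 * Pgon m x1 \<le> 2 * int m - 5"
    "(z - (Pgon m x0 + int a2 * Pgon m x1)) mod 3 = 0"
proof -
  define M where "M = int m"
  have M: "4 \<le> M" using assms(1) by (simp add: M_def)
  show thesis
  proof (cases "a2 = 1")
    case True
    then have "(z - (M - 3)) mod 3 = 0 \<or> (z - (M - 2)) mod 3 = 0 \<or> (z - (2 * M - 6)) mod 3 = 0"
      using assms(3) unfolding has_gap_def gap_residue_def M_def by presburger
    then show thesis
      using that[of "-1" 0] that[of "-1" 1] that[of "-1" "-1"] True M by (auto simp: M_def)
  next
    case False
    then have "a2 = 2" using assms(2) by simp
    then have "(z - (M - 3)) mod 3 = 0 \<or> (z - (M - 1)) mod 3 = 0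
        \<or> (z - (2 * M - 6)) mod 3 = 0 \<or> (z - (2 * M - 5)) mod 3 = 0"
      using assms(3) unfolding has_gap_def gap_residue_def M_def by presburger
    then show thesis
      using that[of "-1" 0] that[of "-1" 1] that[of 0 "-1"] that[of 1 "-1"] \<open>a2 = 2\<close> M
      by (auto simp: M_def)
  qed
qed

lemma head_decomposition:
  fixes z k :: int
  assumes m: "4 \<le> m" and a2: "a2 = 1 \<or> a2 = 2" and k: "2 * int m \<le> 3 * k"
    and z: "0 \<le> z" "z < 3 * (int m - 3)" and not_gap: "\<not> in_gap a2 m z"
  obtains x0 x1 y where "z = Pgon m x0 + int a2 * Pgon m x1 + 3 * y" "0 \<le> y" "y \<le> k"
proof (cases "z \<le> 3 * k + 2")
  case True
  obtain x0 x1 where h: "Pgon m x0 + int a2 * Pgon m x1 = z mod 3"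
  proof -
    have "z mod 3 = 0 \<or> z mod 3 = 1 \<or> z mod 3 = 2" by presburger
    then consider "z mod 3 = 0" | "z mod 3 = 1" | "z mod 3 = 2" by blast
    then show thesis
    proof cases
      case 1
      then show thesis using that[of 0 0] by simp
    next
      case 2
      then show thesis using that[of 1 0] by simp
    next
      case 3
      then show thesis using that[of 1 1] that[of 0 1] a2 by auto
    qed
  qed
  then have "z = Pgon m x0 + int a2 * Pgon m x1 + 3 * (z div 3)" by simp
  moreover have "0 \<le> z div 3" "z div 3 \<le> k" using True z by auto
  ultimately show thesis by (rule that)
next
  case False
  obtain x0 x1 where "int m - 3 \<le> Pgon m x0 + int a2 * Pgon m x1"
    "Pgon m x0 + int a2 * Pgon m x1 \<le> 2 * int m - 5"
    "(z - (Pgon m x0 + int a2 * Pgon m x1)) mod 3 = 0"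
    using head_window[OF m a2 not_gap] .
  moreover define v where "v = Pgon m x0 + int a2 * Pgon m x1"
  ultimately have v: "int m - 3 \<le> v" "v \<le> 2 * int m - 5" "(z - v) mod 3 = 0" by simp_all
  then obtain y where "z - v = 3 * y" by (auto simp: mod_eq_0_iff_dvd elim: dvdE)
  moreover have "z < 3 * int m - 9" using z(2) by simp
  ultimately have "z = v + 3 * y" "0 \<le> y" "3 * y < 3 * k" using v(1,2) False k by linarith+
  then have "z = v + 3 * y" "0 \<le> y" "y \<le> k" by simp_all
  then show thesis using that unfolding v_def by blast
qed

lemma head_block_decomposition:
  assumes m: "4 \<le> m" and a2: "a2 = 1 \<or> a2 = 2" and k: "2 * int m \<le> 3 * int k"
    and N: "0 \<le> N" "N div (3 * (int m - 3)) + 2 \<le> int k" and not_gap: "\<not> in_gap a2 m N"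
  obtains x0 x1 g
  where "N = Pgon m x0 + int a2 * Pgon m x1 + 3 * (\<Sum>i\<in>{lo..<lo + k}. Pgon m (g i))"
proof -
  define s where "s = N div (3 * (int m - 3))"
  define z where "z = N mod (3 * (int m - 3))"
  have d: "0 < 3 * (int m - 3)" using m by simp
  have "0 \<le> z" "z < 3 * (int m - 3)" unfolding z_def using d by simp_all
  moreover have "z mod 3 = N mod 3" unfolding z_def by (simp add: mod_mod_cancel)
  ultimately obtain x0 x1 y where z_eq: "z = Pgon m x0 + int a2 * Pgon m x1 + 3 * y"
    and y: "0 \<le> y" "y \<le> int k"
    using head_decomposition[OF m a2 k, of z] not_gap by auto
  have "0 \<le> s" unfolding s_def using N(1) d by (simp add: pos_imp_zdiv_nonneg_iff)
  with y N(2) obtain g where "(\<Sum>i\<in>{lo..<lo + k}. Pgon m (g i)) = s * (int m - 3) + y"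
    using sum_Pgon_attains[where lo = lo and m = m, of s y k] unfolding s_def by auto
  moreover have "N = 3 * (int m - 3) * s + z" unfolding s_def z_def by simp
  ultimately show thesis using that[of x0 x1 g] z_eq by (simp add: algebra_simps)
qed

text \<open>For \<open>a2 = 2\<close> the head reaches \<open>3 = P(1) + 2 P(1)\<close> for free.\<close>

definition head_shift :: "nat \<Rightarrow> int" where
  "head_shift a2 = (if a2 = 2 then 1 else 0)"

lemma head_misses_gap_value:
  assumes gap: "has_gap a2 m" and a2: "a2 = 1 \<or> a2 = 2"
    and v: "v0 \<in> {0, 1, int m - 3, int m}" "v1 \<in> {0, 1, int m - 3, int m}"
    and R: "0 \<le> R" "R \<le> \<sigma>" and \<sigma>: "\<sigma> + head_shift a2 \<le> int m - 5"
  shows "v0 + int a2 * v1 + 3 * R \<noteq> 3 * (\<sigma> + head_shift a2 + 1) + gap_residue a2 m"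
proof
  define \<delta> \<rho> where "\<delta> = head_shift a2" and "\<rho> = gap_residue a2 m"
  assume "v0 + int a2 * v1 + 3 * R = 3 * (\<sigma> + head_shift a2 + 1) + gap_residue a2 m"
  then have X: "v0 + int a2 * v1 = 3 * (\<sigma> - R + \<delta> + 1) + \<rho>" unfolding \<delta>_def \<rho>_def by simp
  have \<rho>: "\<rho> = 0 \<or> \<rho> = 2" unfolding \<rho>_def gap_residue_def by simp
  then have X_mod: "(v0 + int a2 * v1) mod 3 = \<rho>" unfolding X by presburger
  have "3 * \<delta> + 3 \<le> 3 * (\<sigma> - R + \<delta> + 1) + \<rho>" "3 * (\<sigma> - R + \<delta> + 1) + \<rho> \<le> 3 * int m - 12 + \<rho>"
    using R \<sigma> \<rho> unfolding \<delta>_def by auto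
  then have X_lo: "3 * \<delta> + 3 \<le> v0 + int a2 * v1" and X_hi: "v0 + int a2 * v1 \<le> 3 * int m - 12 + \<rho>"
    unfolding X by simp_all
  have v0: "v0 = 0 \<or> v0 = 1 \<or> v0 = int m - 3 \<or> v0 = int m"
    and v1: "v1 = 0 \<or> v1 = 1 \<or> v1 = int m - 3 \<or> v1 = int m" using v by simp_all
  consider "a2 = 1" "\<delta> = 0" "int m mod 3 = 0" "\<rho> = 2" | "a2 = 1" "\<delta> = 0" "int m mod 3 = 1" "\<rho> = 0"
    | "a2 = 2" "\<delta> = 1" "int m mod 3 = 2" "\<rho> = 0"
  proof -
    have "int m mod 3 = 0 \<or> int m mod 3 = 1 \<or> int m mod 3 = 2" by presburger
    then show thesis
      using that gap a2 unfolding has_gap_def \<delta>_def \<rho>_def head_shift_def gap_residue_def by auto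
  qed
  then show False
    using v0 v1 X_mod X_lo X_hi by cases (elim disjE; simp; presburger)+
qed

lemma head_meets_gap_residue:
  assumes a2: "a2 = 1 \<or> a2 = 2" and d: "0 \<le> d" "d \<le> k + head_shift a2" and k: "0 \<le> k"
  obtains x e where "Pgon m x + int a2 * Pgon m x = gap_residue a2 m + 3 * e"
    "0 \<le> e" "e \<le> d" "d - e \<le> k"
proof (cases "d \<le> k")
  case True
  show thesis
  proof (cases "gap_residue a2 m = 2")
    case True
    then have "a2 = 1" unfolding gap_residue_def by (auto split: if_splits)
    then show thesis using that[of 1 0] True d \<open>d \<le> k\<close> by simp
  next
    case False
    then have "gap_residue a2 m = 0" unfolding gap_residue_def by (auto split: if_splits)
    then show thesis using that[of 0 0] d \<open>d \<le> k\<close> by simp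
  qed
next
  case False
  then have "a2 = 2" "d = k + 1" using d unfolding head_shift_def by (auto split: if_splits)
  then show thesis using that[of 1 1] k unfolding gap_residue_def by simp
qed

section \<open>Size of the parameters\<close>

lemma div_le_of_less_mult:
  fixes N d c :: int
  assumes "0 < d" "N < d * (c + 1)"
  shows "N div d \<le> c"
proof -
  have "N div d * d \<le> N" using div_mult_mod_eq[of N d] pos_mod_sign[OF assms(1), of N] by linarith
  then have "d * (N div d) \<le> N" by (simp add: mult.commute)
  then have "d * (N div d) < d * (c + 1)" using assms(2) by linarith
  then show ?thesis using assms(1) by (simp add: mult_less_cancel_left_pos)
qed

lemma div_period_le:
  assumes "4 \<le> m" "N \<le> int C * (int m - 2)"
  shows "N div (3 * (int m - 3)) \<le> int C"
proof (rule div_le_of_less_mult)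
  have "int C * (int m - 2) \<le> int C * (3 * (int m - 3))"
    using assms(1) by (intro mult_left_mono) auto
  then show "N < 3 * (int m - 3) * (int C + 1)" using assms by (simp add: algebra_simps)
qed (use assms in simp)

lemma period_decomposition:
  assumes m: "4 \<le> m" and N: "0 \<le> N" "N \<le> int C * (int m - 2)"
  obtains s q where "N = 3 * (s * (int m - 3) + q) + N mod 3"
    "0 \<le> s" "s \<le> int C" "0 \<le> q" "q \<le> int m - 4"
proof -
  define d where "d = 3 * (int m - 3)"
  define s where "s = N div d"
  define r where "r = N mod d"
  define q where "q = r div 3"
  have d: "0 < d" using m unfolding d_def by simp
  have "r mod 3 = N mod 3" unfolding r_def d_def by (simp add: mod_mod_cancel)
  then have r_eq: "r = 3 * q + N mod 3" unfolding q_def using div_mult_mod_eq[of r 3] by linarith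
  have "N = d * s + r" unfolding s_def r_def by simp
  also have "\<dots> = 3 * (s * (int m - 3) + q) + N mod 3" unfolding r_eq d_def by (simp add: algebra_simps)
  finally have "N = 3 * (s * (int m - 3) + q) + N mod 3" .
  moreover have "0 \<le> s" "s \<le> int C"
    unfolding s_def d_def using div_period_le[OF m N(2)] N(1) d by (auto simp: d_def pos_imp_zdiv_nonneg_iff)
  moreover have "0 \<le> r" "r < 3 * (int m - 4 + 1)"
    unfolding r_def using pos_mod_bound[of d N] pos_mod_sign[of d N] d by (simp_all add: d_def)
  then have "0 \<le> q" "q \<le> int m - 4"
    unfolding q_def using div_le_of_less_mult[of 3 r "int m - 4"] by simp_all
  ultimately show thesis by (rule that)
qed

lemma block_length_inequality:
  fixes c M l :: int
  assumes c: "15 \<le> c" and M: "6 * (c * c) + 6 * (c * c * c) < M" and l: "M - 2 - c \<le> l * (c + 1)"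
  shows "2 * M \<le> 3 * ((c - 4) * l + 3)"
proof -
  have c_sq: "0 \<le> c * c" and c_cube: "0 \<le> c * c * c" using c by simp_all
  have "(c + 1) * (2 * M) \<le> 3 * (c - 4) * (M - 2 - c) + 9 * (c + 1)"
  proof -
    have "0 \<le> M" using M c_sq c_cube by linarith
    then have "15 * M \<le> c * M" using c by (intro mult_right_mono) auto
    moreover have "3 * (c - 4) * (M - 2 - c) + 9 * (c + 1) - (c + 1) * (2 * M)
        = (c * M - 14 * M) - 3 * (c * c) + 15 * c + 33"
      by (simp add: algebra_simps)
    ultimately show ?thesis using M c_sq c_cube c by linarith
  qed
  also have "3 * (c - 4) * (M - 2 - c) \<le> 3 * (c - 4) * (l * (c + 1))"
    using l c by (intro mult_left_mono) auto
  also have "3 * (c - 4) * (l * (c + 1)) + 9 * (c + 1) = (c + 1) * (3 * ((c - 4) * l + 3))"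
    by (simp add: algebra_simps)
  finally have "(c + 1) * (2 * M) \<le> (c + 1) * (3 * ((c - 4) * l + 3))" by simp
  then show ?thesis using c by (simp add: mult_le_cancel_left)
qed

lemma block_length_bounds:
  fixes C m :: nat
  assumes C: "15 \<le> C" and m: "6 * C^2 * (C + 1) < m"
  defines "k \<equiv> (C - 4) * ((m - 2) div (C + 1)) + 3"
  shows "20 \<le> m" "2 * int m \<le> 3 * int k" "int C + 2 \<le> int k"
proof -
  define l where "l = (m - 2) div (C + 1)"
  define c where "c = int C"
  have c: "15 \<le> c" using C by (simp add: c_def)
  have "15^2 * 16 \<le> C^2 * (C + 1)" using C by (intro mult_mono power_mono) auto
  then have "3600 \<le> C^2 * (C + 1)" by simp
  moreover have "6 * C^2 * (C + 1) = 6 * (C^2 * (C + 1))" by simp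
  ultimately show m20: "20 \<le> m" using m by linarith
  have "int (6 * C^2 * (C + 1)) < int m" using m by linarith
  then have M: "6 * (c * c) + 6 * (c * c * c) < int m"
    unfolding c_def by (simp add: power2_eq_square algebra_simps)
  have "(C + 1) * l + (m - 2) mod (C + 1) = m - 2" unfolding l_def by (rule mult_div_mod_eq)
  moreover have "(m - 2) mod (C + 1) < C + 1" by simp
  ultimately have "int (m - 2) < int ((C + 1) * l + (C + 1))" by linarith
  then have "int m - 2 - c \<le> int l * (c + 1)"
    using m20 unfolding c_def by (simp add: of_nat_diff algebra_simps)
  moreover have "int k = (c - 4) * int l + 3"
    using C unfolding k_def l_def c_def by (simp add: of_nat_diff)
  ultimately show k: "2 * int m \<le> 3 * int k"
    using block_length_inequality[OF c M] by simp
  have "15 * c \<le> c * c" "0 \<le> c * c * c" using c by (auto intro: mult_right_mono)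
  then have "3 * c + 6 \<le> int m" using M c by linarith
  with k show "int C + 2 \<le> int k" unfolding c_def by linarith
qed

section \<open>Nodes beginning with a block of threes\<close>

text \<open>
  Lists are 0-indexed, so the paper's \<open>a\<^sub>i\<close> is \<open>as ! (i - 1)\<close>; in the application
  \<open>L = (C - 4) l\<^sub>m + 5\<close> and \<open>a2 = a\<^sub>2\<close>.
\<close>

locale three_block_node =
  fixes m C :: nat and as :: "nat list" and L a2 :: nat
  assumes node: "escalator_node m as"
    and m_ge: "4 \<le> m"
    and L_ge: "3 \<le> L" and L_le: "L \<le> length as"
    and as_0: "as ! 0 = 1" and as_1: "as ! 1 = a2" and a2: "a2 = 1 \<or> a2 = 2"
    and as_block: "\<And>i. 2 \<le> i \<Longrightarrow> i < L \<Longrightarrow> as ! i = 3"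
    and block_long: "2 * int m \<le> 3 * int (L - 2)"
    and block_C: "int C + 2 \<le> int (L - 2)"
begin

lemma represents_head_block_tail:
  "represents m as (Pgon m x0 + int a2 * Pgon m x1 + 3 * (\<Sum>i\<in>{2..<L}. Pgon m (g1 i))
     + (\<Sum>i\<in>{L..<length as}. int (as ! i) * Pgon m (g2 i)))"
proof -
  define f where "f i = (if i = 0 then x0 else if i = 1 then x1 else if i < L then g1 i else g2 i)" for i
  let ?F = "\<lambda>i. int (as ! i) * Pgon m (f i)"
  have "(\<Sum>i<length as. ?F i) = (\<Sum>i\<in>{0..<2}. ?F i) + (\<Sum>i\<in>{2..<L}. ?F i) + (\<Sum>i\<in>{L..<length as}. ?F i)"
    using sum.atLeastLessThan_concat[of 0 2 "length as" ?F, symmetric]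
      sum.atLeastLessThan_concat[of 2 L "length as" ?F, symmetric] L_ge L_le
    by (simp add: atLeast0LessThan add.assoc)
  also have "(\<Sum>i\<in>{0..<2}. ?F i) = Pgon m x0 + int a2 * Pgon m x1"
    using as_0 as_1 by (simp add: f_def numeral_2_eq_2)
  also have "(\<Sum>i\<in>{2..<L}. ?F i) = 3 * (\<Sum>i\<in>{2..<L}. Pgon m (g1 i))"
    by (simp add: sum_distrib_left f_def as_block)
  also have "(\<Sum>i\<in>{L..<length as}. ?F i) = (\<Sum>i\<in>{L..<length as}. int (as ! i) * Pgon m (g2 i))"
    using L_ge by (intro sum.cong) (auto simp: f_def)
  finally show ?thesis unfolding represents_iff by (intro exI[of _ f]) simp
qed

lemma block_decomposition:
  assumes "0 \<le> N" "N \<le> int C * (int m - 2)" "\<not> in_gap a2 m N"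
  obtains x0 x1 g where "N = Pgon m x0 + int a2 * Pgon m x1 + 3 * (\<Sum>i\<in>{2..<L}. Pgon m (g i))"
proof -
  have "N div (3 * (int m - 3)) + 2 \<le> int (L - 2)"
    using div_period_le[OF m_ge assms(2)] block_C by simp
  then obtain x0 x1 g
    where "N = Pgon m x0 + int a2 * Pgon m x1 + 3 * (\<Sum>i\<in>{2..<2 + (L - 2)}. Pgon m (g i))"
    using head_block_decomposition[OF m_ge a2 block_long assms(1) _ assms(3), where lo = 2] by blast
  moreover have "2 + (L - 2) = L" using L_ge by simp
  ultimately show thesis using that by (simp only:)
qed

lemma represents_outside_gap:
  assumes "0 \<le> N" "N \<le> int C * (int m - 2)" "\<not> in_gap a2 m N"
  shows "represents m as N"
proof -
  obtain x0 x1 g where "N = Pgon m x0 + int a2 * Pgon m x1 + 3 * (\<Sum>i\<in>{2..<L}. Pgon m (g i))"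
    using block_decomposition[OF assms] .
  then show ?thesis using represents_head_block_tail[of x0 x1 g "\<lambda>_. 0"] by simp
qed

lemma represents_upto_if_last_not_dvd:
  assumes last: "\<not> 3 dvd last as" and N: "1 \<le> N" "N \<le> int C * (int m - 2)"
  shows "represents m as N"
proof (cases "in_gap a2 m N")
  case False
  then show ?thesis using represents_outside_gap N by simp
next
  case True
  define n where "n = length as - 1"
  have "as \<noteq> []" using L_ge L_le by auto
  then have "as ! n = last as" unfolding n_def by (simp add: last_conv_nth)
  then have "L \<le> n" using last as_block[of n] L_ge L_le unfolding n_def by fastforce
  then have n: "n < length as" "L \<le> n" using L_ge unfolding n_def by simp_all
  have b_le: "int (as ! n) \<le> truant m (take n as)"
    using escalator_node_coefficient_le_truant[OF node _ n(1)] m_ge by simp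
  have nu: "\<not> universal m (take n as)" using escalator_node_step[OF node n(1)] by simp
  show ?thesis
  proof (cases "N < int (as ! n)")
    case True
    then have "represents m (take n as) N" using represents_less_truant[OF nu] N b_le by simp
    then show ?thesis by (rule represents_take)
  next
    case False
    have "\<not> in_gap a2 m (N - int (as ! n))"
      using not_in_gap_diff True last \<open>as ! n = last as\<close> by simp
    then obtain x0 x1 g
      where g: "N - int (as ! n) = Pgon m x0 + int a2 * Pgon m x1 + 3 * (\<Sum>i\<in>{2..<L}. Pgon m (g i))"
      using block_decomposition[of "N - int (as ! n)"] False N by auto
    let ?h = "\<lambda>i. if i = n then 1 else 0"
    have "(\<Sum>i\<in>{L..<length as}. int (as ! i) * Pgon m (?h i)) = int (as ! n)"
      using n by (simp add: if_distrib sum.delta cong: if_cong)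
    moreover have "N = Pgon m x0 + int a2 * Pgon m x1 + 3 * (\<Sum>i\<in>{2..<L}. Pgon m (g i)) + int (as ! n)"
      using g by simp
    ultimately show ?thesis using represents_head_block_tail[of x0 x1 g ?h] by simp
  qed
qed

end

locale three_block_node_dvd = three_block_node +
  assumes coefficients_dvd: "\<And>i. 2 \<le> i \<Longrightarrow> i < length as \<Longrightarrow> 3 dvd as ! i"
begin

definition level :: "nat \<Rightarrow> int" where
  "level p = (\<Sum>i\<in>{2..<p}. int (as ! i)) div 3"

definition gap_value :: "nat \<Rightarrow> int" where
  "gap_value p = 3 * (level p + head_shift a2 + 1) + gap_residue a2 m"

lemma coefficient_ge_3:
  assumes "2 \<le> i" "i < length as"
  shows "3 \<le> as ! i"
proof -
  have "0 < as ! i"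
    using escalator_node_is_form[OF node] assms(2) unfolding is_form_def by (simp add: nth_mem)
  then show ?thesis using coefficients_dvd[OF assms] by (auto elim: dvdE)
qed

lemma three_level:
  assumes "p \<le> length as"
  shows "3 * level p = (\<Sum>i\<in>{2..<p}. int (as ! i))"
proof -
  have "3 dvd (\<Sum>i\<in>{2..<p}. int (as ! i))"
    using coefficients_dvd assms by (intro dvd_sum) (simp add: int_dvd_int_iff[of 3, simplified])
  then show ?thesis unfolding level_def by simp
qed

lemma level_L: "level L = int L - 2"
proof -
  have "3 * level L = 3 * (int L - 2)"
    using three_level[OF L_le] as_block L_ge by (simp add: of_nat_diff)
  then show ?thesis by simp
qed

lemma level_Suc:
  assumes "2 \<le> p" "p < length as"
  shows "3 * level (Suc p) = 3 * level p + int (as ! p)"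
  using three_level[of p] three_level[of "Suc p"] assms by simp

lemma level_ge_block: "L \<le> p \<Longrightarrow> p \<le> length as \<Longrightarrow> int L - 2 \<le> level p"
proof (induction p rule: dec_induct)
  case base
  then show ?case by (simp add: level_L)
next
  case (step p)
  then show ?case using level_Suc[of p] L_ge by simp
qed

lemma level_length_ge:
  assumes "3 * (int m - 3) - 1 \<le> int (sum_list as)"
  shows "int m - 4 \<le> level (length as)"
proof -
  have "int (sum_list as) = (\<Sum>i\<in>{0..<2}. int (as ! i)) + (\<Sum>i\<in>{2..<length as}. int (as ! i))"
    using sum.atLeastLessThan_concat[of 0 2 "length as" "\<lambda>i. int (as ! i)"] L_ge L_le
    by (simp add: sum_list_sum_nth atLeast0LessThan)
  also have "\<dots> = 1 + int a2 + 3 * level (length as)"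
    using three_level[of "length as"] as_0 as_1 by (simp add: numeral_2_eq_2)
  finally show ?thesis using assms a2 by presburger
qed

lemma middle_sum_bounded:
  assumes p: "p \<le> length as"
    and small: "(\<Sum>i\<in>{2..<p}. int (as ! i) * Pgon m (f i)) < 3 * (int m - 3)"
  obtains R where "(\<Sum>i\<in>{2..<p}. int (as ! i) * Pgon m (f i)) = 3 * R" "0 \<le> R" "R \<le> level p"
proof -
  let ?S = "\<Sum>i\<in>{2..<p}. int (as ! i) * Pgon m (f i)"
  have nonneg: "0 \<le> int (as ! i) * Pgon m (f i)" for i using m_ge by (simp add: Pgon_nonneg)
  have f01: "f i \<in> {0, 1}" if i: "i \<in> {2..<p}" for i
  proof (rule ccontr)
    assume "f i \<notin> {0, 1}"
    then have "int m - 3 \<le> Pgon m (f i)" using Pgon_ge_m_minus_3 m_ge by simp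
    moreover have "3 \<le> int (as ! i)" using coefficient_ge_3 i p by simp
    ultimately have "3 * (int m - 3) \<le> int (as ! i) * Pgon m (f i)"
      using m_ge by (intro mult_mono) auto
    also have "\<dots> \<le> ?S" using i nonneg by (intro member_le_sum) auto
    finally show False using small by simp
  qed
  define T where "T = (\<Sum>i\<in>{2..<p}. if f i = 1 then int (as ! i) else 0)"
  have S_eq: "?S = T" unfolding T_def
  proof (rule sum.cong)
    fix i assume "i \<in> {2..<p}"
    then have "f i = 0 \<or> f i = 1" using f01 by simp
    then show "int (as ! i) * Pgon m (f i) = (if f i = 1 then int (as ! i) else 0)" by auto
  qed simp
  have "3 dvd T"
    unfolding T_def using coefficients_dvd p
    by (intro dvd_sum) (simp add: int_dvd_int_iff[of 3, simplified])
  then obtain R where "T = 3 * R" by (elim dvdE)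
  moreover have "0 \<le> T" unfolding T_def by (intro sum_nonneg) simp
  moreover have "T \<le> 3 * level p" unfolding T_def three_level[OF p] by (intro sum_mono) simp
  ultimately show thesis using that S_eq by simp
qed

lemma not_represents_gap_value:
  assumes gap: "has_gap a2 m" and p: "L \<le> p" "p \<le> length as"
    and small: "level p + head_shift a2 \<le> int m - 5"
  shows "\<not> represents m (take p as) (gap_value p)"
proof
  assume "represents m (take p as) (gap_value p)"
  then obtain f
    where "gap_value p = (\<Sum>i<length (take p as). int (take p as ! i) * Pgon m (f i))"
    unfolding represents_iff ..
  also have "\<dots> = (\<Sum>i\<in>{0..<2}. int (as ! i) * Pgon m (f i)) + (\<Sum>i\<in>{2..<p}. int (as ! i) * Pgon m (f i))"
    using sum.atLeastLessThan_concat[of 0 2 p "\<lambda>i. int (as ! i) * Pgon m (f i)"] p L_ge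
    by (simp add: min_absorb1 atLeast0LessThan)
  also have "(\<Sum>i\<in>{0..<2}. int (as ! i) * Pgon m (f i)) = Pgon m (f 0) + int a2 * Pgon m (f 1)"
    using as_0 as_1 by (simp add: numeral_2_eq_2)
  finally have eq: "gap_value p = Pgon m (f 0) + int a2 * Pgon m (f 1) + (\<Sum>i\<in>{2..<p}. int (as ! i) * Pgon m (f i))" .
  have gap_small: "gap_value p < 3 * int m - 9"
    using small unfolding gap_value_def gap_residue_def by auto
  have P0: "0 \<le> Pgon m (f 0)" and P1: "Pgon m (f 1) \<le> int a2 * Pgon m (f 1)"
    using m_ge a2 Pgon_nonneg[of m "f 1"] by (auto simp: Pgon_nonneg)
  have P1_nonneg: "0 \<le> Pgon m (f 1)" using m_ge by (simp add: Pgon_nonneg)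
  have "(\<Sum>i\<in>{2..<p}. int (as ! i) * Pgon m (f i)) < 3 * int m - 9"
    using eq gap_small P0 P1 P1_nonneg by linarith
  then have "(\<Sum>i\<in>{2..<p}. int (as ! i) * Pgon m (f i)) < 3 * (int m - 3)" by simp
  then obtain R where R: "(\<Sum>i\<in>{2..<p}. int (as ! i) * Pgon m (f i)) = 3 * R" "0 \<le> R" "R \<le> level p"
    using middle_sum_bounded[OF p(2)] by blast
  have "Pgon m (f 0) < 3 * int m - 8" "Pgon m (f 1) < 3 * int m - 8"
    using eq gap_small R(1,2) P0 P1 P1_nonneg by linarith+
  then have "Pgon m (f 0) \<in> {0, 1, int m - 3, int m}" "Pgon m (f 1) \<in> {0, 1, int m - 3, int m}"
    using Pgon_less_cases m_ge by simp_all
  from head_misses_gap_value[OF gap a2 this R(2,3) small] eq R(1)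
  show False unfolding gap_value_def by simp
qed

lemma coefficient_le_gap_value:
  assumes gap: "has_gap a2 m" and p: "L \<le> p" "p < length as"
    and small: "level p + head_shift a2 \<le> int m - 5"
  shows "int (as ! p) \<le> gap_value p"
proof -
  have nu: "\<not> universal m (take p as)" using escalator_node_step[OF node p(2)] by simp
  have "0 < gap_value p"
    using level_ge_block[of p] p L_ge unfolding gap_value_def head_shift_def gap_residue_def by auto
  then have "truant m (take p as) \<le> gap_value p"
    using truant_le[OF nu] not_represents_gap_value[OF gap p(1) _ small] p(2) by simp
  then show ?thesis using escalator_node_coefficient_le_truant[OF node _ p(2)] m_ge by simp
qed

lemma tail_attains:
  assumes gap: "has_gap a2 m"
  shows "L \<le> p \<Longrightarrow> p \<le> length as \<Longrightarrow> 0 \<le> q \<Longrightarrow> q \<le> level p + head_shift a2 \<Longrightarrow>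
    q \<le> int m - 4 \<Longrightarrow> \<exists>g w. (\<Sum>i\<in>{L..<p}. int (as ! i) * Pgon m (g i)) = 3 * w
      \<and> q - (int L - 2 + head_shift a2) \<le> w \<and> w \<le> q"
proof (induction p arbitrary: q rule: dec_induct)
  case base
  then show ?case using level_L by (intro exI[of _ "\<lambda>_. 0"] exI[of _ 0]) auto
next
  case (step n)
  have n: "n < length as" using step by simp
  obtain c where c: "int (as ! n) = 3 * c"
    using coefficients_dvd[of n] step(1) L_ge n by (auto simp: int_dvd_int_iff[of 3, simplified] elim: dvdE)
  have level_Suc: "level (Suc n) = level n + c" using level_Suc[of n] L_ge step(1) n c by simp
  note extend = sum_atLeastLessThan_Suc_fun_upd[OF step(1), of "\<lambda>i x. int (as ! i) * Pgon m x"]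
  show ?case
  proof (cases "q \<le> level n + head_shift a2")
    case True
    then have "\<exists>g w. (\<Sum>i\<in>{L..<n}. int (as ! i) * Pgon m (g i)) = 3 * w
      \<and> q - (int L - 2 + head_shift a2) \<le> w \<and> w \<le> q"
      using step.IH[of q] step.prems n by simp
    then obtain g w where "(\<Sum>i\<in>{L..<n}. int (as ! i) * Pgon m (g i)) = 3 * w"
      "q - (int L - 2 + head_shift a2) \<le> w" "w \<le> q" by blast
    then show ?thesis using extend[of g 0] by (intro exI[of _ "g(n := 0)"] exI[of _ w]) simp
  next
    case False
    then have small: "level n + head_shift a2 \<le> int m - 5" using step by linarith
    have "3 * c \<le> gap_value n" using coefficient_le_gap_value[OF gap step(1) n small] c by simp
    then have "3 * c < 3 * (level n + head_shift a2 + 2)"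
      unfolding gap_value_def gap_residue_def by (auto split: if_splits)
    then have "c \<le> level n + head_shift a2 + 1" by simp
    moreover have "0 \<le> c" using c by simp
    ultimately obtain g w where "(\<Sum>i\<in>{L..<n}. int (as ! i) * Pgon m (g i)) = 3 * w"
      "q - c - (int L - 2 + head_shift a2) \<le> w" "w \<le> q - c"
      using step.IH[of "q - c"] step.prems False level_Suc n by auto
    then show ?thesis using extend[of g 1] c by (intro exI[of _ "g(n := 1)"] exI[of _ "w + c"]) simp
  qed
qed

lemma represents_upto_if_sum_large:
  assumes sum: "3 * (int m - 3) - 1 \<le> int (sum_list as)"
    and N: "1 \<le> N" "N \<le> int C * (int m - 2)"
  shows "represents m as N"
proof (cases "in_gap a2 m N")
  case False
  then show ?thesis using represents_outside_gap N by simp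
next
  case True
  then have gap: "has_gap a2 m" and N_mod: "N mod 3 = gap_residue a2 m" by simp_all
  have "0 \<le> N" using N(1) by simp
  then obtain s q where N_eq: "N = 3 * (s * (int m - 3) + q) + N mod 3"
    and s: "0 \<le> s" "s \<le> int C" and q: "0 \<le> q" "q \<le> int m - 4"
    using period_decomposition[OF m_ge _ N(2)] by blast
  have "0 \<le> head_shift a2" unfolding head_shift_def by simp
  then have "q \<le> level (length as) + head_shift a2" using q level_length_ge[OF sum] by linarith
  then have "\<exists>g w. (\<Sum>i\<in>{L..<length as}. int (as ! i) * Pgon m (g i)) = 3 * w
      \<and> q - (int L - 2 + head_shift a2) \<le> w \<and> w \<le> q"
    using tail_attains[OF gap L_le order_refl] q by simp
  then obtain g2 w where tail: "(\<Sum>i\<in>{L..<length as}. int (as ! i) * Pgon m (g2 i)) = 3 * w"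
    "q - (int L - 2 + head_shift a2) \<le> w" "w \<le> q" by blast
  have "int L - 2 = int (L - 2)" using L_ge by simp
  then have "0 \<le> q - w" "q - w \<le> int (L - 2) + head_shift a2" "0 \<le> int (L - 2)"
    using tail(2,3) by linarith+
  then obtain x e where head: "Pgon m x + int a2 * Pgon m x = gap_residue a2 m + 3 * e"
    "0 \<le> e" "e \<le> q - w" "q - w - e \<le> int (L - 2)"
    using head_meets_gap_residue[OF a2, where m = m] by blast
  have "0 \<le> q - w - e" "q - w - e \<le> int (L - 2) + 2 * s" "s + 2 \<le> int (L - 2)"
    using head(3,4) s block_C by linarith+
  then have "\<exists>g. (\<Sum>i\<in>{2..<2 + (L - 2)}. Pgon m (g i)) = s * (int m - 3) + (q - w - e)"
    using sum_Pgon_attains[where lo = 2 and m = m, OF s(1)] by blast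
  moreover have "2 + (L - 2) = L" using L_ge by simp
  ultimately obtain g1 where block: "(\<Sum>i\<in>{2..<L}. Pgon m (g1 i)) = s * (int m - 3) + (q - w - e)"
    by (auto simp only:)
  have "N = Pgon m x + int a2 * Pgon m x + 3 * (\<Sum>i\<in>{2..<L}. Pgon m (g1 i))
      + (\<Sum>i\<in>{L..<length as}. int (as ! i) * Pgon m (g2 i))"
    unfolding block tail(1) head(1) N_eq[unfolded N_mod] by (simp add: algebra_simps)
  then show ?thesis using represents_head_block_tail[of x x g1 g2] by simp
qed

end

lemma three_block_nodeI:
  fixes C m :: nat and as :: "nat list"
  assumes C: "standing_constant C" and m: "6 * C^2 * (C + 1) < m" and node: "escalator_node m as"
    and n: "(int C - 4) * int ((m - 2) div (C + 1)) + 5 \<le> int (length as)"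
    and threes: "\<forall>i. 3 \<le> i \<and> int i \<le> (int C - 4) * int ((m - 2) div (C + 1)) + 5
      \<longrightarrow> as ! (i - 1) = 3"
  shows "three_block_node m C as ((C - 4) * ((m - 2) div (C + 1)) + 5) (as ! 1)"
proof -
  define L where "L = (C - 4) * ((m - 2) div (C + 1)) + 5"
  have C15: "15 \<le> C" using standing_constant_ge_15[OF C] .
  have L_int: "int L = (int C - 4) * int ((m - 2) div (C + 1)) + 5"
    using C15 unfolding L_def by (simp add: of_nat_diff)
  have L2: "(C - 4) * ((m - 2) div (C + 1)) + 3 = L - 2" unfolding L_def by simp
  have bounds: "20 \<le> m" "2 * int m \<le> 3 * int (L - 2)" "int C + 2 \<le> int (L - 2)"
    using block_length_bounds[OF C15 m, unfolded L2] by blast+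
  have L_le: "L \<le> length as" using n L_int by linarith
  have block: "as ! i = 3" if "2 \<le> i" "i < L" for i
    using threes[rule_format, of "Suc i"] that L_int by simp
  have "as ! 0 = 1" "as ! 1 = 1 \<or> as ! 1 = 2"
    using escalator_node_first_coefficients[OF node] bounds(1) L_le unfolding L_def by simp_all
  with node bounds L_le block show ?thesis
    unfolding L_def[symmetric] by unfold_locales simp_all
qed

theorem lemma4p17:
  fixes C m :: nat and as :: "nat list"
  assumes hC: "standing_constant C"
    and hm3: "3 \<le> m"
    and hm: "m > 6 * C^2 * (C + 1)"
    and hnode: "escalator_node m as"
    and hn: "int (length as) \<ge> (int C - 4) * int ((m - 2) div (C + 1)) + 5"
    and h3: "\<forall>i. 3 \<le> i \<and> int i \<le> (int C - 4) * int ((m - 2) div (C + 1)) + 5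
               \<longrightarrow> as ! (i - 1) = 3"
  shows "((int (sum_list as) \<ge> 3 * (int m - 3) - 1 \<and>
           (\<forall>i. 3 \<le> i \<and> i \<le> length as \<longrightarrow> as ! (i - 1) mod 3 = 0))
            \<longrightarrow> universal m as)
       \<and> (last as mod 3 \<noteq> 0 \<longrightarrow> universal m as)"
proof -
  define L where "L = (C - 4) * ((m - 2) div (C + 1)) + 5"
  interpret three_block_node m C as L "as ! 1"
    using three_block_nodeI[OF hC hm hnode hn h3] unfolding L_def .
  have universal: "universal m as" if "\<And>N. 1 \<le> N \<Longrightarrow> N \<le> int C * (int m - 2) \<Longrightarrow> represents m as N"
    using hC hm3 escalator_node_is_form[OF hnode] that unfolding standing_constant_def by blast
  show ?thesis
  proof (intro conjI impI)
    assume h: "int (sum_list as) \<ge> 3 * (int m - 3) - 1 \<and>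
      (\<forall>i. 3 \<le> i \<and> i \<le> length as \<longrightarrow> as ! (i - 1) mod 3 = 0)"
    interpret three_block_node_dvd m C as L "as ! 1"
      by unfold_locales (use h in \<open>auto simp: dvd_eq_mod_eq_0 dest: spec[of _ "Suc _"]\<close>)
    show "universal m as" using universal represents_upto_if_sum_large h by blast
  next
    assume "last as mod 3 \<noteq> 0"
    then show "universal m as"
      using universal represents_upto_if_last_not_dvd by (simp add: dvd_eq_mod_eq_0)
  qed
qed

end
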